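(* Let $\mathcal L$ be an algebraic system, $\mathbf{STop}\mathcal{L}$ the category of semitopological $\mathcal L$-structures, and let $X$ be (the domain of) a structure in $\mathbf{STop}\mathcal{L}$. Then $\mathrm{r}_{\mathcal C_1}X=X/R_{\mathcal C_1}$, where $R_{\mathcal C_1}$ is the intersection of all equivalence relations on $X$ whose equivalence classes are closed in $X$; furthermore, $R_{\mathcal C_1}$ is an $\mathcal L$-congruence on $X$.
   Context: $\mathcal C_1$ is the epireflective subcategory of $\mathbf{Top}$ consisting of $T_1$ spaces and $\mathrm{r}_{\mathcal C_1}X$ is the $T_1$-reflection of $X$ (the universal $T_1$ quotient: every continuous map from $X$ into a $T_1$ space factors uniquely through the continuous surjection $X\to\mathrm{r}_{\mathcal C_1}X$). An algebraic system $\mathcal L$ consists of constant symbols, function symbols of finite arity $\ge1$ and equations; a semitopological $\mathcal L$-structure is an $\mathcal L$-structure on a topological space with all operations separately continuous. An $\mathcal L$-congruence is an equivalence relation $R$ such that whenever $(x_i,y_i)\in R$ for $i=1,\dots,n$ and $\Phi$ is an $n$-ary operation, $(\Phi(x_1,\dots,x_n),\Phi(y_1,\dots,y_n))\in R$. *)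

theory Defs
  imports "HOL-Analysis.Analysis"
begin

text \<open>Terms over function symbols of type 'f, with variables indexed by nat.
  Constant symbols are function symbols of arity 0.\<close>
datatype 'f trm = Var nat | Fn 'f "'f trm list"

fun wf_trm :: "('f \<Rightarrow> nat) \<Rightarrow> 'f trm \<Rightarrow> bool" where
  "wf_trm ar (Var n) = True"
| "wf_trm ar (Fn f ts) = (length ts = ar f \<and> (\<forall>t\<in>set ts. wf_trm ar t))"

fun eval_trm :: "('f \<Rightarrow> 'a list \<Rightarrow> 'a) \<Rightarrow> (nat \<Rightarrow> 'a) \<Rightarrow> 'f trm \<Rightarrow> 'a" where
  "eval_trm op v (Var n) = v n"
| "eval_trm op v (Fn f ts) = op f (map (eval_trm op v) ts)"

definition algebraic_system :: "('f \<Rightarrow> nat) \<Rightarrow> ('f trm \<times> 'f trm) set \<Rightarrow> bool" where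
  "algebraic_system ar E \<longleftrightarrow> (\<forall>(s,t)\<in>E. wf_trm ar s \<and> wf_trm ar t)"

definition L_structure ::
  "('f \<Rightarrow> nat) \<Rightarrow> ('f trm \<times> 'f trm) set \<Rightarrow> 'a topology \<Rightarrow> ('f \<Rightarrow> 'a list \<Rightarrow> 'a) \<Rightarrow> bool" where
  "L_structure ar E X op \<longleftrightarrow>
     (\<forall>f xs. length xs = ar f \<and> set xs \<subseteq> topspace X \<longrightarrow> op f xs \<in> topspace X) \<and>
     (\<forall>(s,t)\<in>E. \<forall>v. (\<forall>n. v n \<in> topspace X) \<longrightarrow> eval_trm op v s = eval_trm op v t)"

definition semitopological_L_structure ::
  "('f \<Rightarrow> nat) \<Rightarrow> ('f trm \<times> 'f trm) set \<Rightarrow> 'a topology \<Rightarrow> ('f \<Rightarrow> 'a list \<Rightarrow> 'a) \<Rightarrow> bool" where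
  "semitopological_L_structure ar E X op \<longleftrightarrow> L_structure ar E X op \<and>
     (\<forall>f xs i. length xs = ar f \<and> set xs \<subseteq> topspace X \<and> i < ar f \<longrightarrow>
        continuous_map X X (\<lambda>y. op f (xs[i := y])))"

definition L_congruence ::
  "('f \<Rightarrow> nat) \<Rightarrow> 'a topology \<Rightarrow> ('f \<Rightarrow> 'a list \<Rightarrow> 'a) \<Rightarrow> ('a \<times> 'a) set \<Rightarrow> bool" where
  "L_congruence ar X op R \<longleftrightarrow> equiv (topspace X) R \<and>
     (\<forall>f xs ys. length xs = ar f \<and> length ys = ar f \<and> (\<forall>i < ar f. (xs ! i, ys ! i) \<in> R)
        \<longrightarrow> (op f xs, op f ys) \<in> R)"

definition R_C1 :: "'a topology \<Rightarrow> ('a \<times> 'a) set" where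
  "R_C1 X = \<Inter> {S. equiv (topspace X) S \<and> (\<forall>c \<in> topspace X // S. closedin X c)}"

definition quotient_topology :: "'a topology \<Rightarrow> ('a \<times> 'a) set \<Rightarrow> 'a set topology" where
  "quotient_topology X R = topology (\<lambda>U. U \<subseteq> topspace X // R \<and>
      openin X {x \<in> topspace X. R `` {x} \<in> U})"

text \<open>q : X \<rightarrow> Z is a T1-reflection of X (universal property tested against T1
  spaces whose points have type 'b): Z is T1, q is a continuous surjection, and every
  continuous map from X into a T1 space factors uniquely through q.\<close>
definition T1_reflection :: "'b itself \<Rightarrow> 'a topology \<Rightarrow> 'c topology \<Rightarrow> ('a \<Rightarrow> 'c) \<Rightarrow> bool" where
  "T1_reflection (_::'b itself) X Z q \<longleftrightarrow>
     t1_space Z \<and> continuous_map X Z q \<and> q ` topspace X = topspace Z \<and>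
     (\<forall>(Y::'b topology) f. t1_space Y \<and> continuous_map X Y f \<longrightarrow>
        (\<exists>g. continuous_map Z Y g \<and> (\<forall>x \<in> topspace X. g (q x) = f x) \<and>
             (\<forall>g'. continuous_map Z Y g' \<and> (\<forall>x \<in> topspace X. g' (q x) = f x) \<longrightarrow>
                  (\<forall>z \<in> topspace Z. g' z = g z))))"

end

theory Submission
  imports Defs
begin

text \<open>Closedness survives intersections, so \<open>R_C1 X\<close> is itself an equivalence with closed
  classes, the finest one. Pulling such a relation back along a continuous map gives another one,
  which therefore contains \<open>R_C1 X\<close>. Applied to the identity relation of a \<open>T\<^sub>1\<close> target this
  makes continuous maps into \<open>T\<^sub>1\<close> spaces constant on the classes, which is the universal property
  of \<open>X/R_C1 X\<close>; applied to \<open>R_C1 X\<close> itself along the separately continuous maps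
  \<open>y \<mapsto> op f (zs[i := y])\<close> it shows that \<open>R_C1 X\<close> is compatible with each argument, hence is a
  congruence.\<close>

lemma equiv_Inter:
  assumes "F \<noteq> {}" and "\<And>S. S \<in> F \<Longrightarrow> equiv A S"
  shows "equiv A (\<Inter>F)"
  using assms unfolding equiv_def refl_on_def sym_def trans_def by blast

definition closed_class_equivs :: "'a topology \<Rightarrow> ('a \<times> 'a) set set" where
  "closed_class_equivs X =
     {S. equiv (topspace X) S \<and> (\<forall>x \<in> topspace X. closedin X (S `` {x}))}"

lemma R_C1_eq_Inter_closed_class_equivs: "R_C1 X = \<Inter> (closed_class_equivs X)"
  unfolding R_C1_def closed_class_equivs_def quotient_def by blast

lemma full_relation_in_closed_class_equivs:
  "topspace X \<times> topspace X \<in> closed_class_equivs X"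
proof -
  have "(topspace X \<times> topspace X) `` {x} = topspace X" if "x \<in> topspace X" for x
    using that by auto
  then show ?thesis
    unfolding closed_class_equivs_def by (auto simp: equiv_def refl_on_def sym_def trans_def)
qed

lemma R_C1_subset:
  assumes "equiv (topspace X) S" and "\<And>x. x \<in> topspace X \<Longrightarrow> closedin X (S `` {x})"
  shows "R_C1 X \<subseteq> S"
  using assms unfolding R_C1_eq_Inter_closed_class_equivs closed_class_equivs_def by blast

lemma equiv_R_C1: "equiv (topspace X) (R_C1 X)"
  unfolding R_C1_eq_Inter_closed_class_equivs
  using full_relation_in_closed_class_equivs
  by (intro equiv_Inter) (auto simp: closed_class_equivs_def)

lemma closedin_R_C1_class:
  assumes "x \<in> topspace X"
  shows "closedin X (R_C1 X `` {x})"
proof -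
  have "R_C1 X `` {x} = (\<Inter>S \<in> closed_class_equivs X. S `` {x})"
    unfolding R_C1_eq_Inter_closed_class_equivs by auto
  moreover have "closedin X (\<Inter>S \<in> closed_class_equivs X. S `` {x})"
    using full_relation_in_closed_class_equivs assms
    by (intro closedin_Inter) (auto simp: closed_class_equivs_def)
  ultimately show ?thesis by simp
qed

lemma R_C1_continuous_map_related:
  assumes h: "continuous_map X Y h"
    and S: "equiv (topspace Y) S" and closed: "\<And>y. y \<in> topspace Y \<Longrightarrow> closedin Y (S `` {y})"
    and xx': "(x, x') \<in> R_C1 X"
  shows "(h x, h x') \<in> S"
proof -
  define P where "P = {(u, v). u \<in> topspace X \<and> v \<in> topspace X \<and> (h u, h v) \<in> S}"
  have hX: "h u \<in> topspace Y" if "u \<in> topspace X" for u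
    using h that by (simp add: continuous_map_def Pi_iff)
  have "equiv (topspace X) P"
    using S hX unfolding P_def equiv_def refl_on_def sym_def trans_def by blast
  moreover have "closedin X (P `` {u})" if u: "u \<in> topspace X" for u
  proof -
    have "P `` {u} = {v \<in> topspace X. h v \<in> S `` {h u}}"
      using u unfolding P_def by auto
    then show ?thesis
      using closedin_continuous_map_preimage[OF h closed[OF hX[OF u]]] by simp
  qed
  ultimately have "R_C1 X \<subseteq> P" by (rule R_C1_subset)
  then show ?thesis using xx' unfolding P_def by blast
qed

lemma R_C1_continuous_map_eq:
  assumes f: "continuous_map X Y f" and Y: "t1_space Y" and xx': "(x, x') \<in> R_C1 X"
  shows "f x = f x'"
proof -
  have "equiv (topspace Y) (Id_on (topspace Y))"
    by (auto simp: equiv_def refl_on_def sym_def trans_def)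
  moreover have "closedin Y (Id_on (topspace Y) `` {y})" if "y \<in> topspace Y" for y
    using Y that by (simp add: t1_space_closedin_singleton Image_Id_on)
  ultimately have "(f x, f x') \<in> Id_on (topspace Y)"
    using R_C1_continuous_map_related[OF f _ _ xx'] by blast
  then show ?thesis by auto
qed

lemma R_C1_continuous_self_map:
  assumes "continuous_map X X h" and "(x, x') \<in> R_C1 X"
  shows "(h x, h x') \<in> R_C1 X"
  using R_C1_continuous_map_related[OF assms(1) equiv_R_C1 closedin_R_C1_class assms(2)] .

lemma openin_quotient_topology:
  "openin (quotient_topology X R) U \<longleftrightarrow>
     U \<subseteq> topspace X // R \<and> openin X {x \<in> topspace X. R `` {x} \<in> U}"
proof -
  have "istopology (\<lambda>U. U \<subseteq> topspace X // R \<and> openin X {x \<in> topspace X. R `` {x} \<in> U})"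
    unfolding istopology_def
  proof (rule conjI; intro allI impI)
    fix S T :: "'a set set"
    assume "S \<subseteq> topspace X // R \<and> openin X {x \<in> topspace X. R `` {x} \<in> S}"
      and "T \<subseteq> topspace X // R \<and> openin X {x \<in> topspace X. R `` {x} \<in> T}"
    moreover have "{x \<in> topspace X. R `` {x} \<in> S \<inter> T} =
        {x \<in> topspace X. R `` {x} \<in> S} \<inter> {x \<in> topspace X. R `` {x} \<in> T}" by blast
    ultimately show "S \<inter> T \<subseteq> topspace X // R \<and> openin X {x \<in> topspace X. R `` {x} \<in> S \<inter> T}"
      by auto
  next
    fix K :: "'a set set set"
    assume K: "\<forall>U\<in>K. U \<subseteq> topspace X // R \<and> openin X {x \<in> topspace X. R `` {x} \<in> U}"
    have "{x \<in> topspace X. R `` {x} \<in> \<Union>K} = (\<Union>U\<in>K. {x \<in> topspace X. R `` {x} \<in> U})"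
      by blast
    then show "\<Union>K \<subseteq> topspace X // R \<and> openin X {x \<in> topspace X. R `` {x} \<in> \<Union>K}"
      using K by auto
  qed
  then show ?thesis unfolding quotient_topology_def by simp
qed

lemma topspace_quotient_topology: "topspace (quotient_topology X R) = topspace X // R"
proof
  show "topspace (quotient_topology X R) \<subseteq> topspace X // R"
    unfolding topspace_def openin_quotient_topology by blast
  have "{x \<in> topspace X. R `` {x} \<in> topspace X // R} = topspace X"
    by (auto intro: quotientI)
  then have "openin (quotient_topology X R) (topspace X // R)"
    unfolding openin_quotient_topology by simp
  then show "topspace X // R \<subseteq> topspace (quotient_topology X R)"
    by (rule openin_subset)
qed

lemma continuous_map_quotient_class: "continuous_map X (quotient_topology X R) (\<lambda>x. R `` {x})"
  unfolding continuous_map topspace_quotient_topology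
  by (auto intro: quotientI simp: openin_quotient_topology)

lemma t1_space_quotient_topology:
  assumes R: "equiv (topspace X) R" and closed: "\<And>x. x \<in> topspace X \<Longrightarrow> closedin X (R `` {x})"
  shows "t1_space (quotient_topology X R)"
  unfolding t1_space_closedin_singleton topspace_quotient_topology
proof
  fix c assume c: "c \<in> topspace X // R"
  then obtain a where a: "a \<in> topspace X" "c = R `` {a}" by (auto elim: quotientE)
  have "{x \<in> topspace X. R `` {x} \<in> topspace X // R - {c}} = topspace X - c"
    using R a by (auto intro: quotientI simp: equiv_class_eq_iff)
  then have "openin (quotient_topology X R) (topspace X // R - {c})"
    using closed[OF a(1)] a by (simp add: openin_quotient_topology closedin_def)
  then show "closedin (quotient_topology X R) {c}"
    using c by (simp add: closedin_def topspace_quotient_topology)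
qed

lemma continuous_map_quotient_topology_factor:
  assumes R: "equiv (topspace X) R" and f: "continuous_map X Y f"
    and respects: "\<And>x x'. (x, x') \<in> R \<Longrightarrow> f x = f x'"
  shows "\<exists>g. continuous_map (quotient_topology X R) Y g \<and> (\<forall>x \<in> topspace X. g (R `` {x}) = f x)"
proof (intro exI conjI ballI)
  define g where "g c = f (SOME x. x \<in> c)" for c
  show g: "g (R `` {x}) = f x" if "x \<in> topspace X" for x
  proof -
    have "(SOME y. y \<in> R `` {x}) \<in> R `` {x}"
      using R that by (meson equiv_class_self someI)
    then show ?thesis unfolding g_def using respects by simp
  qed
  show "continuous_map (quotient_topology X R) Y g"
    unfolding continuous_map topspace_quotient_topology
  proof (intro conjI allI impI)
    show "g ` (topspace X // R) \<subseteq> topspace Y"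
      using f g by (auto elim!: quotientE simp: continuous_map_def Pi_iff)
    fix U assume U: "openin Y U"
    have "{x \<in> topspace X. R `` {x} \<in> {c \<in> topspace X // R. g c \<in> U}} =
        {x \<in> topspace X. f x \<in> U}"
      using g by (auto intro: quotientI)
    then show "openin (quotient_topology X R) {c \<in> topspace X // R. g c \<in> U}"
      using U f by (auto simp: openin_quotient_topology continuous_map_def)
  qed
qed

lemma T1_reflection_R_C1:
  "T1_reflection TYPE('b) X (quotient_topology X (R_C1 X)) (\<lambda>x. R_C1 X `` {x})"
  unfolding T1_reflection_def
proof (intro conjI allI impI)
  show "t1_space (quotient_topology X (R_C1 X))"
    using equiv_R_C1 closedin_R_C1_class by (rule t1_space_quotient_topology)
  show "continuous_map X (quotient_topology X (R_C1 X)) (\<lambda>x. R_C1 X `` {x})"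
    by (rule continuous_map_quotient_class)
  show "(\<lambda>x. R_C1 X `` {x}) ` topspace X = topspace (quotient_topology X (R_C1 X))"
    unfolding topspace_quotient_topology quotient_def by blast
  fix Y :: "'b topology" and f
  assume "t1_space Y \<and> continuous_map X Y f"
  then have Y: "t1_space Y" and f: "continuous_map X Y f" by auto
  have "f x = f x'" if "(x, x') \<in> R_C1 X" for x x'
    using f Y that by (rule R_C1_continuous_map_eq)
  then obtain g where g: "continuous_map (quotient_topology X (R_C1 X)) Y g"
      and gf: "\<forall>x \<in> topspace X. g (R_C1 X `` {x}) = f x"
    using continuous_map_quotient_topology_factor[OF equiv_R_C1 f] by blast
  show "\<exists>g. continuous_map (quotient_topology X (R_C1 X)) Y g \<and>
      (\<forall>x \<in> topspace X. g (R_C1 X `` {x}) = f x) \<and>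
      (\<forall>g'. continuous_map (quotient_topology X (R_C1 X)) Y g' \<and>
          (\<forall>x \<in> topspace X. g' (R_C1 X `` {x}) = f x) \<longrightarrow>
        (\<forall>c \<in> topspace (quotient_topology X (R_C1 X)). g' c = g c))"
  proof (intro exI conjI allI impI ballI)
    fix g' c
    assume "continuous_map (quotient_topology X (R_C1 X)) Y g' \<and>
        (\<forall>x \<in> topspace X. g' (R_C1 X `` {x}) = f x)"
      and "c \<in> topspace (quotient_topology X (R_C1 X))"
    then show "g' c = g c"
      using gf by (auto simp: topspace_quotient_topology elim: quotientE)
  qed (use g gf in auto)
qed

lemma equiv_related_if_related_in_each_argument:
  assumes R: "equiv A R"
    and closed: "\<And>zs. length zs = n \<Longrightarrow> set zs \<subseteq> A \<Longrightarrow> F zs \<in> A"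
    and each: "\<And>zs i a b. length zs = n \<Longrightarrow> set zs \<subseteq> A \<Longrightarrow> i < n \<Longrightarrow> (a, b) \<in> R \<Longrightarrow>
        (F (zs[i := a]), F (zs[i := b])) \<in> R"
    and related: "list_all2 (\<lambda>x y. (x, y) \<in> R) xs ys" and n: "length xs = n"
  shows "(F xs, F ys) \<in> R"
  using related n closed each
proof (induction xs ys arbitrary: n F rule: list_all2_induct)
  case Nil
  then show ?case using R by (simp add: equiv_def refl_on_def)
next
  case (Cons x xs y ys)
  have RA: "R \<subseteq> A \<times> A" using R by (simp add: equiv_def refl_on_def)
  have xs: "set xs \<subseteq> A"
    using Cons.hyps(2) RA by (force simp: list_all2_conv_all_nth in_set_conv_nth)
  have A: "x \<in> A" "y \<in> A" "set xs \<subseteq> A"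
    using Cons.hyps(1) RA xs by auto
  obtain m where m: "n = Suc m" "length xs = m" using Cons.prems(1) by auto
  have "(F ((x # xs)[0 := x]), F ((x # xs)[0 := y])) \<in> R"
    by (rule Cons.prems(3)) (use Cons.hyps(1) A m in auto)
  then have head: "(F (x # xs), F (y # xs)) \<in> R" by simp
  have "(F (y # zs[i := a]), F (y # zs[i := b])) \<in> R"
    if "length zs = m" "set zs \<subseteq> A" "i < m" "(a, b) \<in> R" for zs i a b
    using Cons.prems(3)[of "y # zs" "Suc i" a b] that A m by simp
  then have tail: "(F (y # xs), F (y # ys)) \<in> R"
    using Cons.IH[of m "\<lambda>zs. F (y # zs)"] Cons.prems(2) A m by simp
  from head tail show ?case using R by (meson equivE transD)
qed

lemma L_congruence_R_C1:
  assumes "semitopological_L_structure ar E X op"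
  shows "L_congruence ar X op (R_C1 X)"
  unfolding L_congruence_def
proof (intro conjI allI impI)
  show "equiv (topspace X) (R_C1 X)" by (rule equiv_R_C1)
  fix f xs ys
  assume "length xs = ar f \<and> length ys = ar f \<and> (\<forall>i < ar f. (xs ! i, ys ! i) \<in> R_C1 X)"
  then have related: "list_all2 (\<lambda>x y. (x, y) \<in> R_C1 X) xs ys" and n: "length xs = ar f"
    by (auto simp: list_all2_conv_all_nth)
  from assms have ops: "\<forall>f zs. length zs = ar f \<and> set zs \<subseteq> topspace X \<longrightarrow> op f zs \<in> topspace X"
    and cont: "\<forall>f zs i. length zs = ar f \<and> set zs \<subseteq> topspace X \<and> i < ar f \<longrightarrow>
        continuous_map X X (\<lambda>y. op f (zs[i := y]))"
    unfolding semitopological_L_structure_def L_structure_def by blast+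
  have closed: "op f zs \<in> topspace X" if "length zs = ar f" "set zs \<subseteq> topspace X" for zs
    using ops that by simp
  have each: "(op f (zs[i := a]), op f (zs[i := b])) \<in> R_C1 X"
    if "length zs = ar f" "set zs \<subseteq> topspace X" "i < ar f" "(a, b) \<in> R_C1 X" for zs i a b
  proof -
    have "continuous_map X X (\<lambda>y. op f (zs[i := y]))" using cont that(1-3) by blast
    then show ?thesis using that(4) by (rule R_C1_continuous_self_map)
  qed
  show "(op f xs, op f ys) \<in> R_C1 X"
    using equiv_R_C1 closed each related n by (rule equiv_related_if_related_in_each_argument)
qed

theorem corollary3p12:
  fixes ar :: "'f \<Rightarrow> nat" and E :: "('f trm \<times> 'f trm) set"
    and X :: "'a topology" and op :: "'f \<Rightarrow> 'a list \<Rightarrow> 'a"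
  assumes "algebraic_system ar E"
    and "semitopological_L_structure ar E X op"
  shows "T1_reflection TYPE('b) X (quotient_topology X (R_C1 X)) (\<lambda>x. R_C1 X `` {x})
         \<and> L_congruence ar X op (R_C1 X)"
  using T1_reflection_R_C1 L_congruence_R_C1[OF assms(2)] by blast

end
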